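(* Let $d\ge3$ and let $V\ge0$ be locally integrable on $\mathbb R^d$ with $\Delta^{-1}V(x)=-c_d\int_{\mathbb R^d}|x-y|^{2-d}V(y)\,dy\in L^\infty(\mathbb R^d)$. Then for $0<\gamma\le2$, $r>0$ and $y\in\mathbb R^d$, $$\int_{\mathbb R^d}V(z)\Big(1+\frac{|z-y|}{r}\Big)^{-d+\gamma}dz\le c_d^{-1}r^{d-2}\|\Delta^{-1}V\|_{L^\infty}.$$
   Context: $c_d>0$ is the constant for which $\int_0^\infty(4\pi t)^{-d/2}e^{-|x|^2/4t}\,dt=c_d|x|^{2-d}$. *)

theory Defs
  imports "HOL-Analysis.Analysis" "HOL-Probability.Essential_Supremum"
begin

text \<open>The constant c_d: by definition the integral of the heat kernel over time
  equals c_d |x|^(2-d); evaluated at |x| = 1 this gives the value below.\<close>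
definition cd :: "nat \<Rightarrow> real" where
  "cd d = (LBINT t:{0<..}. (4 * pi * t) powr (- real d / 2) * exp (- 1 / (4 * t)))"

text \<open>The (nonnegative) Newton potential  c_d \<integral> |x-y|^(2-d) V(y) dy, i.e. |\<Delta>^{-1} V(x)|
  for V \<ge> 0, as an extended nonnegative real.\<close>
definition newton_pot :: "('a::euclidean_space \<Rightarrow> real) \<Rightarrow> 'a \<Rightarrow> ennreal" where
  "newton_pot V x = ennreal (cd DIM('a)) *
     (\<integral>\<^sup>+ y. ennreal (norm (x - y) powr (2 - real DIM('a)) * V y) \<partial>lebesgue)"

definition Linf_newton :: "('a::euclidean_space \<Rightarrow> real) \<Rightarrow> ennreal" where
  "Linf_newton V = esssup lebesgue (newton_pot V)"

end

theory Submission
  imports Defs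
begin

text \<open>The Newton potential lies below its essential supremum at some point x of the ball of
  radius r around y, since that ball has positive measure. For every z the triangle inequality
  |x - z| \<le> r + |z - y| gives (1 + |z-y|/r)^(\<gamma>-d) \<le> (1 + |z-y|/r)^(2-d) \<le> r^(d-2) |x-z|^(2-d),
  so the weighted integral of V is at most r^(d-2)/c_d times the Newton potential at x.
  Dividing by c_d needs c_d > 0: the heat kernel at |x| = 1 is positive and, as a function of
  time, dominated by a multiple of (1+t)^(-3/2), hence integrable.\<close>

lemma powr_mult_exp_neg_le:
  fixes u p :: real
  assumes "u > 0" "p > 0"
  shows "u powr p * exp (- u) \<le> p powr p"
proof -
  have "(u / p) powr p \<le> exp (u / p) powr p"
    using assms by (intro powr_mono2) (auto intro: order_trans[OF _ exp_ge_add_one_self])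
  also have "\<dots> = exp u"
    using assms by (simp add: powr_def)
  finally have "u powr p / p powr p \<le> exp u"
    using assms by (simp add: powr_divide)
  then show ?thesis
    using assms by (simp add: exp_minus field_simps)
qed

lemma heat_kernel_le:
  fixes p t :: real
  assumes p: "p \<ge> 3/2" and t: "t > 0"
  shows "(4*pi*t) powr (-p) * exp (-1/(4*t)) \<le> ((p/pi) powr p * 2 powr (3/2) + 1) * (1+t) powr (-3/2)"
proof (cases "t \<ge> 1")
  case True
  have "(4*pi*t) powr (-p) * exp (-1/(4*t)) \<le> (4*pi*t) powr (-p)"
    using t by (intro mult_left_le) auto
  also have "\<dots> \<le> (4*pi*t) powr (-3/2)"
    using p True pi_gt3 by (intro powr_mono) (auto simp: algebra_simps intro: order_trans[of 1 t])
  also have "\<dots> \<le> (1+t) powr (-3/2)"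
    using True pi_gt3 by (intro powr_mono2') (auto intro: order_trans[of _ "4*t"])
  also have "\<dots> \<le> ((p/pi) powr p * 2 powr (3/2) + 1) * (1+t) powr (-3/2)"
    by (simp add: mult_le_cancel_right1)
  finally show ?thesis .
next
  case False
  define u where "u = 1/(4*t)"
  have u: "u > 0" and p0: "p > 0"
    using t p by (auto simp: u_def)
  have "(4*pi*t) powr (-p) * exp (-1/(4*t)) = (u powr p * exp (- u)) / pi powr p"
    using t u by (simp add: u_def powr_minus_divide powr_divide powr_mult)
  also have "\<dots> \<le> p powr p / pi powr p"
    using powr_mult_exp_neg_le[OF u p0] by (simp add: divide_right_mono)
  also have "\<dots> = (p/pi) powr p"
    using p0 by (simp add: powr_divide)
  also have "\<dots> \<le> (p/pi) powr p * (2 powr (3/2) * (1+t) powr (-3/2))"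
  proof -
    have "2 powr (3/2) * 2 powr (-3/2) \<le> 2 powr (3/2) * (1+t) powr (-3/2::real)"
      using False t by (intro mult_left_mono powr_mono2') auto
    then have "1 \<le> 2 powr (3/2) * (1+t) powr (-3/2::real)"
      by (simp flip: powr_add)
    then show ?thesis
      by (simp add: mult_le_cancel_left1)
  qed
  also have "\<dots> \<le> ((p/pi) powr p * 2 powr (3/2) + 1) * (1+t) powr (-3/2)"
    by (simp add: distrib_right mult.assoc)
  finally show ?thesis .
qed

lemma nn_integral_one_plus_powr_neg:
  fixes a :: real
  assumes a: "a > 1"
  shows "(\<integral>\<^sup>+x. ennreal ((1+x) powr (-a)) * indicator {0..} x \<partial>lborel) = ennreal (1 / (a - 1))"
proof -
  have "(\<integral>\<^sup>+x. ennreal ((1+x) powr (-a)) * indicator {0..} x \<partial>lborel)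
      = ennreal (0 - (1+0) powr (1-a) / (1-a))"
  proof (rule nn_integral_FTC_atLeast)
    show "(\<lambda>x::real. (1+x) powr (-a)) \<in> borel_measurable borel"
      by measurable
    show "DERIV (\<lambda>x. (1+x) powr (1-a) / (1-a)) x :> (1+x) powr (-a)" if "0 \<le> x" for x
      using that a by (auto intro!: derivative_eq_intros)
    have "((\<lambda>x::real. (1+x) powr (1-a)) \<longlongrightarrow> 0) at_top"
      using a by (intro tendsto_neg_powr filterlim_tendsto_add_at_top[of "\<lambda>_. 1"] filterlim_ident) auto
    then show "((\<lambda>x. (1+x) powr (1-a) / (1-a)) \<longlongrightarrow> 0) at_top"
      using tendsto_divide_zero by blast
  qed auto
  then show ?thesis
    using a by (simp add: field_simps)
qed

lemma set_integrable_heat_kernel: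
  assumes "d \<ge> 3"
  shows "set_integrable lborel {0<..} (\<lambda>t. (4 * pi * t) powr (- real d / 2) * exp (- 1 / (4 * t)))"
proof -
  define B where "B = (real d / 2 / pi) powr (real d / 2) * 2 powr (3/2) + 1"
  have B: "B > 0"
    unfolding B_def by (smt (verit) powr_ge_zero mult_nonneg_nonneg)
  have "(\<integral>\<^sup>+t. ennreal (norm (indicator {0<..} t * ((4 * pi * t) powr (- real d / 2) * exp (- 1 / (4 * t))))) \<partial>lborel)
      \<le> (\<integral>\<^sup>+t. ennreal B * (ennreal ((1+t) powr (-3/2)) * indicator {0..} t) \<partial>lborel)"
  proof (intro nn_integral_mono)
    fix t :: real
    show "ennreal (norm (indicator {0<..} t * ((4 * pi * t) powr (- real d / 2) * exp (- 1 / (4 * t)))))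
        \<le> ennreal B * (ennreal ((1+t) powr (-3/2)) * indicator {0..} t)"
    proof (cases "t > 0")
      case True
      have "(4 * pi * t) powr (- real d / 2) * exp (- 1 / (4 * t)) \<le> B * (1+t) powr (-3/2)"
        using heat_kernel_le[of "real d / 2" t] assms True by (simp add: B_def)
      then show ?thesis
        using True B by (simp add: ennreal_mult[symmetric] ennreal_leI)
    qed simp
  qed
  also have "\<dots> = ennreal B * 2"
    using nn_integral_one_plus_powr_neg[of "3/2"] by (subst nn_integral_cmult) simp_all
  also have "\<dots> < \<infinity>"
    by (simp add: ennreal_mult_less_top)
  finally show ?thesis
    unfolding set_integrable_def by (intro integrableI_bounded) auto
qed

lemma set_integral_pos:
  fixes f :: "'a \<Rightarrow> real"
  assumes int: "set_integrable M A f" and A: "A \<in> sets M" "emeasure M A \<noteq> 0"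
    and pos: "\<And>x. x \<in> A \<Longrightarrow> f x > 0"
  shows "(LINT x:A|M. f x) > 0"
proof -
  have "(LINT x:A|M. f x) \<ge> 0"
    unfolding set_lebesgue_integral_def using pos
    by (intro Bochner_Integration.integral_nonneg) (auto simp: indicator_def less_imp_le)
  moreover have "(LINT x:A|M. f x) \<noteq> 0"
  proof
    assume "(LINT x:A|M. f x) = 0"
    moreover have "(LINT x:A|M. indicator A x * f x) = (LINT x:A|M. f x)"
      using A by (intro set_lebesgue_integral_cong) auto
    ultimately have "(LINT x:A|M. indicator A x * f x) = 0"
      by simp
    then have "A \<in> null_sets M"
      using int A pos by (intro null_if_pos_func_has_zero_int) (auto simp: set_integrable_def)
    then show False
      using A by (simp add: null_sets_def)
  qed
  ultimately show ?thesis
    by simp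
qed

lemma cd_pos:
  assumes "d \<ge> 3"
  shows "cd d > 0"
proof -
  have "emeasure lborel {0<..1::real} \<le> emeasure lborel {0::real<..}"
    by (rule emeasure_mono) auto
  then have "emeasure lborel {0::real<..} \<noteq> 0"
    by auto
  then show ?thesis
    unfolding cd_def using set_integrable_heat_kernel[OF assms]
    by (intro set_integral_pos) auto
qed

lemma exists_le_esssup:
  fixes f :: "'a \<Rightarrow> 'b::{second_countable_topology, dense_linorder, linorder_topology, complete_linorder}"
  assumes "A \<in> sets M" "emeasure M A \<noteq> 0"
  shows "\<exists>x\<in>A. f x \<le> esssup M f"
proof (rule ccontr)
  assume "\<not> ?thesis"
  then have "AE x in M. x \<notin> A"
    using esssup_AE[of f M] by (auto elim: eventually_mono)
  then show False
    using assms AE_iff_null_sets[of A M] by (auto simp: null_sets_def)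
qed

lemma weight_le_newton_kernel:
  fixes x y z :: "'a::real_normed_vector" and d \<gamma> r :: real
  assumes d: "d \<ge> 2" and \<gamma>: "\<gamma> \<le> 2" and r: "r > 0"
    and xy: "norm (x - y) < r" and zx: "z \<noteq> x"
  shows "(1 + norm (z - y) / r) powr (\<gamma> - d) \<le> r powr (d - 2) * norm (x - z) powr (2 - d)"
proof -
  have xz: "norm (x - z) \<le> r + norm (z - y)"
    using norm_triangle_ineq[of "x - y" "y - z"] xy by (simp add: norm_minus_commute)
  have "(1 + norm (z - y) / r) powr (\<gamma> - d) \<le> (1 + norm (z - y) / r) powr (2 - d)"
    using \<gamma> r by (intro powr_mono) auto
  also have "\<dots> = ((r + norm (z - y)) / r) powr (2 - d)"
    using r by (simp add: field_simps)
  also have "\<dots> = (r + norm (z - y)) powr (2 - d) / r powr (2 - d)"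
    using r by (simp add: powr_divide)
  also have "\<dots> = r powr (d - 2) * (r + norm (z - y)) powr (2 - d)"
    using powr_minus_divide[of r "2 - d"] by simp
  also have "\<dots> \<le> r powr (d - 2) * norm (x - z) powr (2 - d)"
    using d zx xz by (intro mult_left_mono powr_mono2') auto
  finally show ?thesis .
qed

lemma nn_integral_weight_le_kernel:
  fixes V :: "'a::euclidean_space \<Rightarrow> real" and x y :: 'a and \<gamma> r :: real
  assumes dim: "DIM('a) \<ge> 2" and Vnonneg: "\<And>z. V z \<ge> 0" and Vmeas: "V \<in> borel_measurable lebesgue"
    and \<gamma>: "\<gamma> \<le> 2" and r: "r > 0" and xy: "x \<in> ball y r"
  shows "(\<integral>\<^sup>+ z. ennreal (V z * (1 + norm (z - y) / r) powr (\<gamma> - real DIM('a))) \<partial>lebesgue)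
    \<le> ennreal (r powr (real DIM('a) - 2)) *
       (\<integral>\<^sup>+ z. ennreal (norm (x - z) powr (2 - real DIM('a)) * V z) \<partial>lebesgue)"
proof -
  let ?n = "real DIM('a)" and ?c = "ennreal (r powr (real DIM('a) - 2))"
  have "(\<lambda>z. norm (x - z) powr (2 - ?n)) \<in> borel_measurable lebesgue"
    by (intro measurable_completion) measurable
  then have kernel_V_meas: "(\<lambda>z. ennreal (norm (x - z) powr (2 - ?n) * V z)) \<in> borel_measurable lebesgue"
    using Vmeas by measurable
  have "AE z in lebesgue. z \<noteq> x"
    by (intro AE_completion AE_lborel_singleton)
  then have "(\<integral>\<^sup>+ z. ennreal (V z * (1 + norm (z - y) / r) powr (\<gamma> - ?n)) \<partial>lebesgue)
      \<le> (\<integral>\<^sup>+ z. ?c * ennreal (norm (x - z) powr (2 - ?n) * V z) \<partial>lebesgue)"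
  proof (rule nn_integral_mono_AE[OF eventually_mono])
    fix z assume "z \<noteq> x"
    then have "(1 + norm (z - y) / r) powr (\<gamma> - ?n) \<le> r powr (?n - 2) * norm (x - z) powr (2 - ?n)"
      using weight_le_newton_kernel[of ?n \<gamma> r x y z] dim \<gamma> r xy
      by (simp add: dist_norm norm_minus_commute)
    then have "V z * (1 + norm (z - y) / r) powr (\<gamma> - ?n) \<le> r powr (?n - 2) * (norm (x - z) powr (2 - ?n) * V z)"
      using Vnonneg[of z] by (simp add: mult.commute mult.left_commute mult_left_mono)
    then show "ennreal (V z * (1 + norm (z - y) / r) powr (\<gamma> - ?n))
        \<le> ?c * ennreal (norm (x - z) powr (2 - ?n) * V z)"
      by (simp add: ennreal_mult[symmetric] Vnonneg ennreal_leI)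
  qed
  also have "\<dots> = ?c * (\<integral>\<^sup>+ z. ennreal (norm (x - z) powr (2 - ?n) * V z) \<partial>lebesgue)"
    using kernel_V_meas by (rule nn_integral_cmult)
  finally show ?thesis .
qed

theorem lemma4p1:
  fixes V :: "'a::euclidean_space \<Rightarrow> real"
    and \<gamma> r :: real and y :: 'a
  assumes dim: "DIM('a) \<ge> 3"
    and Vnonneg: "\<And>x. V x \<ge> 0"
    and Vmeas: "V \<in> borel_measurable lebesgue"
    and Vloc: "\<And>K. compact K \<Longrightarrow> set_integrable lebesgue K V"
    and Linf: "Linf_newton V < \<infinity>"
    and \<gamma>: "0 < \<gamma>" "\<gamma> \<le> 2"
    and r: "r > 0"
  shows "(\<integral>\<^sup>+ z. ennreal (V z * (1 + norm (z - y) / r) powr (\<gamma> - real DIM('a))) \<partial>lebesgue)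
           \<le> ennreal (r powr (real DIM('a) - 2) / cd DIM('a)) * Linf_newton V"
proof -
  let ?n = "real DIM('a)" and ?C = "ennreal (r powr (real DIM('a) - 2) / cd DIM('a))"
  have "emeasure lebesgue (ball y r) \<noteq> 0"
    using content_ball_pos[OF r, of y] by (auto simp: measure_def)
  then obtain x where xy: "x \<in> ball y r" and Nx: "newton_pot V x \<le> Linf_newton V"
    using exists_le_esssup[of "ball y r" lebesgue "newton_pot V"]
    unfolding Linf_newton_def by auto
  have "ennreal (r powr (?n - 2)) = ?C * ennreal (cd DIM('a))"
    using cd_pos[OF dim] by (simp flip: ennreal_mult)
  then have "(\<integral>\<^sup>+ z. ennreal (V z * (1 + norm (z - y) / r) powr (\<gamma> - ?n)) \<partial>lebesgue)
      \<le> ?C * newton_pot V x"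
    using nn_integral_weight_le_kernel[OF _ Vnonneg Vmeas \<gamma>(2) r xy] dim
    by (simp add: newton_pot_def mult.assoc)
  also have "\<dots> \<le> ?C * Linf_newton V"
    using Nx by (rule mult_left_mono) simp
  finally show ?thesis .
qed

end
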